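(* There is a constant $C>0$ such that for every $d\ge2$ and $h\ge1$, if $G$ is the rooted tree of depth $h$ in which every non-leaf vertex has exactly $d$ children and all leaves are at depth $h$, with $n$ vertices in total, then for every rule $\mathcal{R}$ the greedy random walk on $G$ started at the root satisfies $\mathbb{E}[C_E(G)]\le C\,n\log_d n$.
   Context: A greedy random walk (GRW) on a connected locally finite graph $G=(V,E)$ with rule $\mathcal{R}$ started at $v_0$: $X_0=v_0$; with $H_t=\{\{X_{s-1},X_s\}:0<s\le t\}$ and $J_t(v)=\{e\in E: v\in e, e\notin H_t\}$, if $J_t(X_t)\ne\emptyset$ then $X_{t+1}=w$ for some $w$ with $\{X_t,w\}\in J_t(X_t)$, chosen according to an arbitrary (possibly randomized, history-dependent) rule $\mathcal{R}$; if $J_t(X_t)=\emptyset$ then $X_{t+1}$ is a uniformly random neighbor of $X_t$. $C_E(G)=\min\{t:H_t=E\}$ is the edge cover time. *)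

theory Defs
  imports "HOL-Probability.Probability"
begin

text \<open>A graph is given by its edge set E (each edge a two-element set of vertices).
  A history is the list [X_0, ..., X_t] of visited vertices (oldest first).\<close>

definition neighbours :: "'a set set \<Rightarrow> 'a \<Rightarrow> 'a set" where
  "neighbours E v = {w. {v, w} \<in> E}"

definition used_edges :: "'a list \<Rightarrow> 'a set set" where
  "used_edges hist = {{hist ! (s - 1), hist ! s} | s. 0 < s \<and> s < length hist}"

definition unused_at :: "'a set set \<Rightarrow> 'a list \<Rightarrow> 'a \<Rightarrow> 'a set set" where
  "unused_at E hist v = {e \<in> E. v \<in> e \<and> e \<notin> used_edges hist}"

definition valid_rule :: "'a set set \<Rightarrow> ('a list \<Rightarrow> 'a pmf) \<Rightarrow> bool" where
  "valid_rule E R \<longleftrightarrow> (\<forall>hist. unused_at E hist (last hist) \<noteq> {} \<longrightarrow>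
      set_pmf (R hist) \<subseteq> {w. {last hist, w} \<in> unused_at E hist (last hist)})"

definition grw_step :: "'a set set \<Rightarrow> ('a list \<Rightarrow> 'a pmf) \<Rightarrow> 'a list \<Rightarrow> 'a list pmf" where
  "grw_step E R hist =
     map_pmf (\<lambda>w. hist @ [w])
       (if unused_at E hist (last hist) \<noteq> {} then R hist
        else pmf_of_set (neighbours E (last hist)))"

definition grw_hist :: "'a set set \<Rightarrow> ('a list \<Rightarrow> 'a pmf) \<Rightarrow> 'a \<Rightarrow> nat \<Rightarrow> 'a list pmf" where
  "grw_hist E R v0 t = ((\<lambda>p. bind_pmf p (grw_step E R)) ^^ t) (return_pmf [v0])"

text \<open>Expected edge cover time, via E[C_E] = sum_t P(C_E > t), where
  C_E > t iff H_t \<noteq> E (valued in [0,\<infinity>]).\<close>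
definition expected_edge_cover_time ::
  "'a set set \<Rightarrow> ('a list \<Rightarrow> 'a pmf) \<Rightarrow> 'a \<Rightarrow> ennreal" where
  "expected_edge_cover_time E R v0 =
     (\<Sum>t. ennreal (measure_pmf.prob (grw_hist E R v0 t) {hist. used_edges hist \<noteq> E}))"

text \<open>Vertices: words over {0..<d} of length at most h; root is []; the children of
  v are i # v for i < d.\<close>
definition tree_verts :: "nat \<Rightarrow> nat \<Rightarrow> nat list set" where
  "tree_verts d h = {v. length v \<le> h \<and> set v \<subseteq> {..<d}}"

definition tree_edges :: "nat \<Rightarrow> nat \<Rightarrow> nat list set set" where
  "tree_edges d h = {{v, i # v} | v i. i < d \<and> length v < h \<and> set v \<subseteq> {..<d}}"

end

theory Submission
  imports Defs "HOL-Library.Sublist"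
begin

(* The proof is a potential (Foster--Lyapunov drift) argument.  First, for an arbitrary
   iterated pmf kernel, a nonnegative potential whose expected value drops by at least the
   current cost in every step bounds the total expected cost; specialised to the greedy
   random walk with cost "not yet covered", the potential of the start bounds E[C_E].

   On the tree T of depth h (vertices are words over {0..<d}, the parent of x is tl x) the
   visited set V of the walk stays ancestor-closed, the traversed edges are exactly the
   parent edges of V, and all visited vertices with an unvisited child lie on the path from
   the current vertex to the root.  The potential charges 2 N(x) for every unexplored
   subtree (N(x) = size of the subtree of x), one unit per unvisited vertex, and 2 N(x) - 1
   (the expected time of simple random walk to leave a subtree through its root) for every
   explored subtree on the path from the current vertex to the root.  A greedy step
   decreases it by at least 1, a simple random step by exactly 1 in expectation.  At the
   start it is at most 3 n h, and h <= log_d n, which gives the constant C = 3. *)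

section \<open>A drift bound for iterated pmf kernels\<close>

lemma nn_integral_pmf_le_const:
  assumes "\<And>x. x \<in> set_pmf p \<Longrightarrow> f x \<le> c"
  shows "(\<integral>\<^sup>+x. f x \<partial>measure_pmf p) \<le> c"
proof -
  have "(\<integral>\<^sup>+x. f x \<partial>measure_pmf p) \<le> (\<integral>\<^sup>+x. c \<partial>measure_pmf p)"
    using assms by (intro nn_integral_mono_AE AE_pmfI)
  also have "\<dots> = c" by (simp add: measure_pmf.emeasure_space_1)
  finally show ?thesis .
qed

lemma iterated_kernel_drift:
  fixes K :: "'b \<Rightarrow> 'b pmf" and x0 :: 'b and Psi c :: "'b \<Rightarrow> ennreal"
  defines "p \<equiv> \<lambda>t. ((\<lambda>q. bind_pmf q K) ^^ t) (return_pmf x0)"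
  assumes inv_start: "I x0"
    and inv_step: "\<And>x y. I x \<Longrightarrow> y \<in> set_pmf (K x) \<Longrightarrow> I y"
    and drift: "\<And>x. I x \<Longrightarrow> (\<integral>\<^sup>+y. Psi y \<partial>K x) + c x \<le> Psi x"
  shows "(\<Sum>t. \<integral>\<^sup>+x. c x \<partial>p t) \<le> Psi x0"
proof -
  have p_Suc: "p (Suc t) = bind_pmf (p t) K" for t by (simp add: p_def)
  have support: "x \<in> set_pmf (p t) \<Longrightarrow> I x" for t x
  proof (induction t arbitrary: x)
    case 0 thus ?case by (simp add: p_def inv_start)
  next
    case (Suc t) thus ?case by (auto simp: p_Suc intro: inv_step)
  qed
  have step: "(\<integral>\<^sup>+x. Psi x \<partial>p (Suc t)) + (\<integral>\<^sup>+x. c x \<partial>p t) \<le> (\<integral>\<^sup>+x. Psi x \<partial>p t)" for t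
  proof -
    have "(\<integral>\<^sup>+x. Psi x \<partial>p (Suc t)) + (\<integral>\<^sup>+x. c x \<partial>p t)
          = (\<integral>\<^sup>+x. (\<integral>\<^sup>+y. Psi y \<partial>K x) + c x \<partial>p t)"
      by (simp add: p_Suc nn_integral_add)
    also have "\<dots> \<le> (\<integral>\<^sup>+x. Psi x \<partial>p t)"
      by (intro nn_integral_mono_AE AE_pmfI drift support)
    finally show ?thesis .
  qed
  have accumulated: "(\<integral>\<^sup>+x. Psi x \<partial>p t) + (\<Sum>s<t. \<integral>\<^sup>+x. c x \<partial>p s) \<le> Psi x0" for t
  proof (induction t)
    case 0 thus ?case by (simp add: p_def)
  next
    case (Suc t)
    have "(\<integral>\<^sup>+x. Psi x \<partial>p (Suc t)) + (\<Sum>s<Suc t. \<integral>\<^sup>+x. c x \<partial>p s)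
          = ((\<integral>\<^sup>+x. Psi x \<partial>p (Suc t)) + (\<integral>\<^sup>+x. c x \<partial>p t)) + (\<Sum>s<t. \<integral>\<^sup>+x. c x \<partial>p s)"
      by (simp add: algebra_simps)
    also have "\<dots> \<le> (\<integral>\<^sup>+x. Psi x \<partial>p t) + (\<Sum>s<t. \<integral>\<^sup>+x. c x \<partial>p s)"
      using step by (rule add_right_mono)
    finally show ?case using Suc.IH by (rule order_trans)
  qed
  show ?thesis
  proof (rule suminf_le_const[OF summableI])
    fix t
    show "(\<Sum>s<t. \<integral>\<^sup>+x. c x \<partial>p s) \<le> Psi x0"
      using accumulated[of t] by (rule order_trans[rotated]) simp
  qed
qed

lemma grw_cover_time_drift:
  fixes E :: "'a set set" and Psi :: "'a list \<Rightarrow> ennreal"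
  assumes inv_start: "I [v0]"
    and inv_step: "\<And>hist hist'. I hist \<Longrightarrow> hist' \<in> set_pmf (grw_step E R hist) \<Longrightarrow> I hist'"
    and drift: "\<And>hist. I hist \<Longrightarrow>
      (\<integral>\<^sup>+hist'. Psi hist' \<partial>grw_step E R hist) + (if used_edges hist \<noteq> E then 1 else 0) \<le> Psi hist"
  shows "expected_edge_cover_time E R v0 \<le> Psi [v0]"
proof -
  have "ennreal (measure_pmf.prob M {hist. used_edges hist \<noteq> E})
      = (\<integral>\<^sup>+hist. (if used_edges hist \<noteq> E then 1 else 0) \<partial>measure_pmf M)" for M
    by (simp add: measure_pmf.emeasure_eq_measure[symmetric] nn_integral_indicator[symmetric]
        indicator_def of_bool_def del: nn_integral_indicator)
  then show ?thesis
    unfolding expected_edge_cover_time_def grw_hist_def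
    using iterated_kernel_drift[where K = "grw_step E R" and I = I and Psi = Psi
        and c = "\<lambda>hist. if used_edges hist \<noteq> E then 1 else 0", OF inv_start inv_step drift]
    by simp
qed

lemma used_edges_snoc:
  assumes "hist \<noteq> []"
  shows "used_edges (hist @ [w]) = insert {last hist, w} (used_edges hist)"
proof (rule set_eqI, rule iffI)
  fix e assume "e \<in> used_edges (hist @ [w])"
  then obtain s where s: "0 < s" "s < Suc (length hist)"
    "e = {(hist @ [w]) ! (s - 1), (hist @ [w]) ! s}" by (auto simp: used_edges_def)
  show "e \<in> insert {last hist, w} (used_edges hist)"
  proof (cases "s = length hist")
    case True thus ?thesis using s assms by (simp add: nth_append last_conv_nth)
  next
    case False thus ?thesis using s by (auto simp: nth_append used_edges_def)
  qed
next
  fix e assume "e \<in> insert {last hist, w} (used_edges hist)"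
  thus "e \<in> used_edges (hist @ [w])"
  proof
    assume "e = {last hist, w}"
    thus ?thesis using assms unfolding used_edges_def
      by (intro CollectI exI[of _ "length hist"]) (auto simp: nth_append last_conv_nth)
  next
    assume "e \<in> used_edges hist"
    then obtain s where "0 < s" "s < length hist" "e = {hist ! (s - 1), hist ! s}"
      by (auto simp: used_edges_def)
    thus ?thesis unfolding used_edges_def by (intro CollectI exI[of _ s]) (auto simp: nth_append)
  qed
qed

text \<open>In a rooted tree on words, the edges spanned by a set V of vertices closed under taking
  parents (tl) are the edges joining each non-root x in V to its parent.\<close>
definition parent_edges :: "'b list set \<Rightarrow> 'b list set set" where
  "parent_edges V = {{x, tl x} | x. x \<in> V \<and> x \<noteq> []}"

lemma parent_edge_eq_iff:
  assumes "x \<noteq> []" "y \<noteq> []"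
  shows "{x, tl x} = {y, tl y} \<longleftrightarrow> x = y"
proof
  assume eq: "{x, tl x} = {y, tl y}"
  show "x = y"
  proof (rule ccontr)
    assume "x \<noteq> y"
    hence "x = tl y" "tl x = y" using eq by (auto simp: doubleton_eq_iff)
    hence "length y = length y - 2" by (metis diff_diff_left length_tl one_add_one)
    thus False using assms(2) by (cases y) auto
  qed
qed simp

lemma parent_edge_mem_iff:
  assumes "x \<noteq> []"
  shows "{x, tl x} \<in> parent_edges V \<longleftrightarrow> x \<in> V"
  using assms parent_edge_eq_iff by (fastforce simp: parent_edges_def)

section \<open>The complete d-ary tree\<close>

context
  fixes d h :: nat
begin

abbreviation verts :: "nat list set" where "verts \<equiv> tree_verts d h"
abbreviation edges :: "nat list set set" where "edges \<equiv> tree_edges d h"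

definition subtree :: "nat list \<Rightarrow> nat list set" where
  "subtree x = {y \<in> verts. suffix x y}"

definition subtree_size :: "nat list \<Rightarrow> nat" where
  "subtree_size x = card (subtree x)"

definition children :: "nat list \<Rightarrow> nat list set" where
  "children v = (if length v < h then (\<lambda>i. i # v) ` {..<d} else {})"

lemma finite_verts: "finite verts"
proof -
  have "verts = {xs. set xs \<subseteq> {..<d} \<and> length xs \<le> h}" by (auto simp: tree_verts_def)
  thus ?thesis using finite_lists_length_le[of "{..<d}" h] by simp
qed

lemma finite_verts_filter: "finite {x. x \<in> verts \<and> P x}"
  using finite_verts by simp

lemma verts_Cons: "i # v \<in> verts \<longleftrightarrow> i < d \<and> v \<in> verts \<and> length v < h"
  by (auto simp: tree_verts_def)

lemma children_in_verts: "v \<in> verts \<Longrightarrow> c \<in> children v \<Longrightarrow> c \<in> verts"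
  by (auto simp: children_def verts_Cons split: if_splits)

lemma finite_children: "finite (children v)"
  by (simp add: children_def)

lemma finite_subtree: "finite (subtree x)"
  using finite_verts by (simp add: subtree_def)

lemma subtree_size_pos: "x \<in> verts \<Longrightarrow> subtree_size x \<ge> 1"
  using finite_subtree[of x] by (auto simp: subtree_size_def subtree_def Suc_le_eq card_gt_0_iff)

lemma subtree_decomp:
  assumes "v \<in> verts"
  shows "subtree v = insert v (\<Union>c\<in>children v. subtree c)"
proof
  show "subtree v \<subseteq> insert v (\<Union>c\<in>children v. subtree c)"
  proof
    fix y assume y: "y \<in> subtree v"
    then obtain zs where yz: "y = zs @ v" and yV: "y \<in> verts"
      by (auto simp: subtree_def suffix_def)
    show "y \<in> insert v (\<Union>c\<in>children v. subtree c)"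
    proof (cases zs rule: rev_cases)
      case Nil thus ?thesis using yz by simp
    next
      case (snoc ys i)
      have "i # v \<in> verts" using yV yz snoc by (auto simp: tree_verts_def)
      hence "i # v \<in> children v" by (auto simp: children_def verts_Cons)
      moreover have "y \<in> subtree (i # v)" using yV yz snoc by (auto simp: subtree_def suffix_def)
      ultimately show ?thesis by blast
    qed
  qed
next
  show "insert v (\<Union>c\<in>children v. subtree c) \<subseteq> subtree v"
    using assms by (auto simp: subtree_def children_def suffix_def split: if_splits)
qed

lemma subtree_size_decomp:
  assumes "v \<in> verts"
  shows "subtree_size v = 1 + (\<Sum>c\<in>children v. subtree_size c)"
proof -
  have disjoint: "subtree c1 \<inter> subtree c2 = {}"
    if c: "c1 \<in> children v" "c2 \<in> children v" and ne: "c1 \<noteq> c2" for c1 c2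
  proof -
    obtain i j where ij: "c1 = i # v" "c2 = j # v"
      using c by (auto simp: children_def split: if_splits)
    hence "i \<noteq> j" using ne by blast
    have "\<not> (suffix (i # v) y \<and> suffix (j # v) y)" for y
      using \<open>i \<noteq> j\<close> by (auto simp: suffix_def)
    thus ?thesis using ij by (auto simp: subtree_def)
  qed
  have root_new: "v \<notin> (\<Union>c\<in>children v. subtree c)"
    by (auto simp: children_def subtree_def dest: suffix_length_le split: if_splits)
  have "subtree_size v = 1 + card (\<Union>c\<in>children v. subtree c)"
    using subtree_decomp[OF assms] root_new finite_children finite_subtree
    by (simp add: subtree_size_def)
  also have "card (\<Union>c\<in>children v. subtree c) = (\<Sum>c\<in>children v. subtree_size c)"
    unfolding subtree_size_def
    by (rule card_UN_disjoint[OF finite_children]) (use finite_subtree disjoint in auto)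
  finally show ?thesis .
qed

lemma tree_edge_iff: "{a, b} \<in> edges \<longleftrightarrow>
   (a \<in> verts \<and> length a < h \<and> (\<exists>i<d. b = i # a)) \<or> (b \<in> verts \<and> length b < h \<and> (\<exists>i<d. a = i # b))"
proof
  assume "{a, b} \<in> edges"
  then obtain v i where vi: "{a, b} = {v, i # v}" "i < d" "length v < h" "set v \<subseteq> {..<d}"
    unfolding tree_edges_def by blast
  have "v \<in> verts" using vi by (simp add: tree_verts_def)
  moreover from vi(1) have "(a = v \<and> b = i # v) \<or> (a = i # v \<and> b = v)" by (simp add: doubleton_eq_iff)
  ultimately show "(a \<in> verts \<and> length a < h \<and> (\<exists>i<d. b = i # a)) \<or>
      (b \<in> verts \<and> length b < h \<and> (\<exists>i<d. a = i # b))"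
    using vi by blast
next
  have edge: "{v, i # v} \<in> edges" if "v \<in> verts" "length v < h" "i < d" for v i
    using that unfolding tree_edges_def tree_verts_def by blast
  assume "(a \<in> verts \<and> length a < h \<and> (\<exists>i<d. b = i # a)) \<or>
      (b \<in> verts \<and> length b < h \<and> (\<exists>i<d. a = i # b))"
  thus "{a, b} \<in> edges" using edge by (auto simp: insert_commute)
qed

lemma tree_edges_eq_parent_edges: "edges = parent_edges verts"
proof (rule set_eqI)
  fix e
  have "e \<in> edges \<longleftrightarrow> (\<exists>v i. e = {v, i # v} \<and> i # v \<in> verts)"
    by (auto simp: tree_edges_def tree_verts_def)
  also have "\<dots> \<longleftrightarrow> (\<exists>x. e = {x, tl x} \<and> x \<in> verts \<and> x \<noteq> [])"
  proof
    assume "\<exists>v i. e = {v, i # v} \<and> i # v \<in> verts"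
    then obtain v i where "e = {v, i # v}" "i # v \<in> verts" by blast
    thus "\<exists>x. e = {x, tl x} \<and> x \<in> verts \<and> x \<noteq> []"
      by (intro exI[of _ "i # v"]) (simp add: insert_commute)
  next
    assume "\<exists>x. e = {x, tl x} \<and> x \<in> verts \<and> x \<noteq> []"
    then obtain x where "e = {x, tl x}" "x \<in> verts" "x \<noteq> []" by blast
    thus "\<exists>v i. e = {v, i # v} \<and> i # v \<in> verts"
      by (intro exI[of _ "tl x"] exI[of _ "hd x"]) (simp add: insert_commute)
  qed
  finally show "e \<in> edges \<longleftrightarrow> e \<in> parent_edges verts" by (simp add: parent_edges_def)
qed

lemma neighbours_tree:
  assumes "v \<in> verts"
  shows "neighbours edges v = (if v = [] then {} else {tl v}) \<union> children v"
proof -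
  have "{v, w} \<in> edges \<longleftrightarrow> w \<in> (if v = [] then {} else {tl v}) \<union> children v" for w
  proof (cases v)
    case Nil thus ?thesis using assms by (auto simp: tree_edge_iff children_def)
  next
    case (Cons j u)
    thus ?thesis using assms by (auto simp: tree_edge_iff children_def verts_Cons)
  qed
  thus ?thesis by (auto simp: neighbours_def)
qed

lemma neighbours_nonroot:
  assumes "v \<in> verts" "v \<noteq> []"
  shows "neighbours edges v = insert (tl v) (children v)" and "tl v \<notin> children v"
  using neighbours_tree[OF assms(1)] assms(2)
  by (auto simp: children_def dest: arg_cong[of _ _ length])

lemma neighbours_finite_nonempty:
  assumes "0 < d" "0 < h" "v \<in> verts"
  shows "finite (neighbours edges v)" and "neighbours edges v \<noteq> {}"
proof -
  show "finite (neighbours edges v)" using neighbours_tree[OF assms(3)] finite_children by simp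
  have "v = [] \<Longrightarrow> [0] \<in> children v" using assms by (auto simp: children_def)
  thus "neighbours edges v \<noteq> {}" using neighbours_tree[OF assms(3)] by (auto split: if_splits)
qed

lemma power_le_card_verts: "d ^ h \<le> card verts"
proof -
  have "{xs. set xs \<subseteq> {..<d} \<and> length xs = h} \<subseteq> verts" by (auto simp: tree_verts_def)
  hence "card {xs. set xs \<subseteq> {..<d} \<and> length xs = h} \<le> card verts"
    by (rule card_mono[OF finite_verts])
  thus ?thesis by (simp add: card_lists_length_eq)
qed

section \<open>The invariant of the greedy random walk on the tree\<close>

definition frontier :: "nat list set \<Rightarrow> nat list set" where
  "frontier V = {y \<in> V. length y < h \<and> (\<exists>i<d. i # y \<notin> V)}"

definition walk_inv :: "nat list list \<Rightarrow> bool" where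
  "walk_inv hist \<longleftrightarrow> hist \<noteq> [] \<and> set hist \<subseteq> verts \<and>
     (\<forall>x\<in>set hist. x \<noteq> [] \<longrightarrow> tl x \<in> set hist) \<and>
     used_edges hist = parent_edges (set hist) \<and>
     (\<forall>y\<in>frontier (set hist). suffix y (last hist))"

lemma walk_inv_start: "walk_inv [[]]"
  by (auto simp: walk_inv_def used_edges_def parent_edges_def frontier_def tree_verts_def)

lemma walk_inv_last:
  assumes "walk_inv hist"
  shows "last hist \<in> set hist" and "last hist \<in> verts"
  using assms by (auto simp: walk_inv_def)

lemma unused_at_iff_frontier:
  assumes I: "walk_inv hist"
  shows "unused_at edges hist (last hist) \<noteq> {} \<longleftrightarrow> last hist \<in> frontier (set hist)"
proof -
  let ?v = "last hist" and ?V = "set hist"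
  have used: "used_edges hist = parent_edges ?V" using I by (simp add: walk_inv_def)
  note v = walk_inv_last[OF I]
  have "unused_at edges hist ?v \<noteq> {} \<longleftrightarrow>
      (\<exists>x\<in>verts. x \<noteq> [] \<and> ?v \<in> {x, tl x} \<and> {x, tl x} \<notin> parent_edges ?V)"
    unfolding unused_at_def tree_edges_eq_parent_edges used parent_edges_def[of verts] by blast
  also have "\<dots> \<longleftrightarrow> (\<exists>x\<in>verts. x \<noteq> [] \<and> ?v \<in> {x, tl x} \<and> x \<notin> ?V)"
    using parent_edge_mem_iff by blast
  also have "\<dots> \<longleftrightarrow> (\<exists>i<d. length ?v < h \<and> i # ?v \<notin> ?V)"
  proof
    assume "\<exists>x\<in>verts. x \<noteq> [] \<and> ?v \<in> {x, tl x} \<and> x \<notin> ?V"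
    then obtain x where x: "x \<in> verts" "x \<noteq> []" "?v \<in> {x, tl x}" "x \<notin> ?V" by blast
    have "x \<noteq> ?v" using x(4) v(1) by blast
    hence "x = hd x # ?v" using x(2,3) by auto
    thus "\<exists>i<d. length ?v < h \<and> i # ?v \<notin> ?V" using x(1,4) verts_Cons by metis
  next
    assume "\<exists>i<d. length ?v < h \<and> i # ?v \<notin> ?V"
    then obtain i where "i < d" "length ?v < h" "i # ?v \<notin> ?V" by blast
    thus "\<exists>x\<in>verts. x \<noteq> [] \<and> ?v \<in> {x, tl x} \<and> x \<notin> ?V"
      using v(2) by (intro bexI[of _ "i # ?v"]) (auto simp: verts_Cons)
  qed
  finally show ?thesis using v(1) by (auto simp: frontier_def)
qed

lemma grw_step_tree:
  assumes "walk_inv hist"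
  shows "grw_step edges R hist = map_pmf (\<lambda>w. hist @ [w])
    (if last hist \<in> frontier (set hist) then R hist else pmf_of_set (neighbours edges (last hist)))"
  using unused_at_iff_frontier[OF assms] by (simp add: grw_step_def)

lemma greedy_choice:
  assumes I: "walk_inv hist" and R: "valid_rule edges R"
    and F: "last hist \<in> frontier (set hist)" and w: "w \<in> set_pmf (R hist)"
  shows "\<exists>i<d. w = i # last hist \<and> length (last hist) < h \<and> w \<notin> set hist"
proof -
  let ?v = "last hist" and ?V = "set hist"
  have used: "used_edges hist = parent_edges ?V" using I by (simp add: walk_inv_def)
  have "{?v, w} \<in> unused_at edges hist ?v"
    using R w F unused_at_iff_frontier[OF I] by (auto simp: valid_rule_def)
  hence e: "{?v, w} \<in> parent_edges verts" "{?v, w} \<notin> parent_edges ?V"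
    by (simp_all add: unused_at_def tree_edges_eq_parent_edges used)
  from e(1) obtain x where x: "{?v, w} = {x, tl x}" "x \<in> verts" "x \<noteq> []"
    unfolding parent_edges_def by blast
  have "x \<notin> ?V" using e(2) x(1,3) parent_edge_mem_iff by metis
  have "x \<noteq> ?v" using \<open>x \<notin> ?V\<close> walk_inv_last(1)[OF I] by blast
  hence "x = w" "tl x = ?v" using x(1) by (auto simp: doubleton_eq_iff)
  hence "w = hd w # ?v" using x(3) by (metis list.collapse)
  thus ?thesis using x(2) \<open>x \<notin> ?V\<close> \<open>x = w\<close> by (metis verts_Cons)
qed

lemma walk_inv_greedy:
  assumes I: "walk_inv hist" and i: "i < d" "length (last hist) < h" "i # last hist \<notin> set hist"
  shows "walk_inv (hist @ [i # last hist])"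
proof -
  let ?v = "last hist" and ?V = "set hist" and ?w = "i # last hist"
  have ne: "hist \<noteq> []" using I by (simp add: walk_inv_def)
  have w: "?w \<in> verts" using i walk_inv_last[OF I] by (simp add: verts_Cons)
  have "used_edges (hist @ [?w]) = insert {?w, tl ?w} (parent_edges ?V)"
    using used_edges_snoc[OF ne] I by (simp add: walk_inv_def insert_commute)
  also have "\<dots> = parent_edges (insert ?w ?V)" by (auto simp: parent_edges_def)
  finally have used: "used_edges (hist @ [?w]) = parent_edges (set (hist @ [?w]))" by simp
  have "suffix y ?w" if "y \<in> frontier (insert ?w ?V)" for y
  proof (cases "y = ?w")
    case False
    hence "y \<in> frontier ?V" using that by (auto simp: frontier_def)
    hence "suffix y ?v" using I by (auto simp: walk_inv_def)
    thus ?thesis by (rule suffix_ConsI)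
  qed simp
  thus ?thesis using I w used walk_inv_last(1)[OF I] by (auto simp: walk_inv_def)
qed

lemma walk_inv_random:
  assumes I: "walk_inv hist" and nF: "last hist \<notin> frontier (set hist)"
    and w: "w \<in> neighbours edges (last hist)"
  shows "w \<in> set hist" and "walk_inv (hist @ [w])"
proof -
  let ?v = "last hist" and ?V = "set hist"
  note v = walk_inv_last[OF I]
  have ne: "hist \<noteq> []" and closed: "\<And>x. x \<in> ?V \<Longrightarrow> x \<noteq> [] \<Longrightarrow> tl x \<in> ?V"
    and used: "used_edges hist = parent_edges ?V"
    and anc: "\<And>y. y \<in> frontier ?V \<Longrightarrow> suffix y ?v" using I by (auto simp: walk_inv_def)
  consider (up) "?v \<noteq> []" "w = tl ?v" | (down) i where "i < d" "length ?v < h" "w = i # ?v"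
    using w neighbours_tree[OF v(2)] by (auto simp: children_def split: if_splits)
  note w_cases = this
  show wV: "w \<in> ?V"
  proof (cases rule: w_cases)
    case up thus ?thesis using closed v(1) by simp
  next
    case down thus ?thesis using nF v(1) by (auto simp: frontier_def)
  qed
  have "{?v, w} \<in> parent_edges ?V"
  proof (cases rule: w_cases)
    case up thus ?thesis using v(1) by (simp add: parent_edge_mem_iff)
  next
    case down
    have "{w, tl w} \<in> parent_edges ?V" using parent_edge_mem_iff[of w ?V] wV down(3) by simp
    moreover have "{?v, w} = {w, tl w}" using down(3) by (simp add: insert_commute)
    ultimately show ?thesis by simp
  qed
  hence used': "used_edges (hist @ [w]) = parent_edges (set (hist @ [w]))"
    using used_edges_snoc[OF ne] used wV by (simp add: insert_absorb)
  have anc': "suffix y w" if y: "y \<in> frontier ?V" for y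
  proof (cases rule: w_cases)
    case up
    have "y \<noteq> ?v" using y nF by blast
    thus ?thesis using anc[OF y] up by (metis suffix_Cons list.collapse)
  next
    case down thus ?thesis using anc[OF y] by (simp add: suffix_ConsI)
  qed
  have "set (hist @ [w]) = ?V" using wV by auto
  thus "walk_inv (hist @ [w])" using I used' anc' by (simp add: walk_inv_def)
qed

lemma walk_inv_step:
  assumes "0 < d" "0 < h" and I: "walk_inv hist" and R: "valid_rule edges R"
    and hist': "hist' \<in> set_pmf (grw_step edges R hist)"
  shows "walk_inv hist'"
proof (cases "last hist \<in> frontier (set hist)")
  case True
  then obtain w where "w \<in> set_pmf (R hist)" "hist' = hist @ [w]"
    using hist' by (auto simp: grw_step_tree[OF I])
  thus ?thesis using greedy_choice[OF I R True] walk_inv_greedy[OF I] by blast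
next
  case False
  note nbrs = neighbours_finite_nonempty[OF assms(1,2) walk_inv_last(2)[OF I]]
  obtain w where "w \<in> neighbours edges (last hist)" "hist' = hist @ [w]"
    using hist' False nbrs by (auto simp: grw_step_tree[OF I])
  thus ?thesis using walk_inv_random(2)[OF I False] by blast
qed

lemma walk_inv_covered:
  assumes "walk_inv hist" "set hist = verts"
  shows "used_edges hist = edges"
  using assms by (simp add: walk_inv_def tree_edges_eq_parent_edges)

section \<open>The potential\<close>

definition explored :: "nat list set \<Rightarrow> nat list \<Rightarrow> bool" where
  "explored V x \<longleftrightarrow> subtree x \<subseteq> V"

definition unexplored_cost :: "nat list set \<Rightarrow> nat" where
  "unexplored_cost V =
     (\<Sum>x | x \<in> verts \<and> x \<noteq> [] \<and> \<not> explored V x. 2 * subtree_size x) + card (verts - V)"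

text \<open>Cost of climbing from v back to the frontier: 2 N(x) - 1, the expected time for simple
  random walk started at x to reach the parent of x, for every explored subtree of a
  non-root ancestor x of v.\<close>
definition return_cost :: "nat list set \<Rightarrow> nat list \<Rightarrow> nat" where
  "return_cost V v =
     (\<Sum>x | x \<in> verts \<and> x \<noteq> [] \<and> suffix x v \<and> explored V x. 2 * subtree_size x - 1)"

definition potential :: "nat list list \<Rightarrow> nat" where
  "potential hist = unexplored_cost (set hist) + return_cost (set hist) (last hist)"

definition walk_potential :: "nat list list \<Rightarrow> nat" where
  "walk_potential hist = (if set hist = verts then 0 else potential hist)"

text \<open>A greedy step to an unvisited child decreases the potential by at least one: the child
  is no longer unvisited, and the subtrees explored below the new vertex were unexplored
  before, so their return cost is paid for by the unexplored cost; before the step no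
  ancestor of v was explored, since v had an unvisited child.\<close>
lemma greedy_potential_drop:
  assumes I: "walk_inv hist" and i: "i < d" "length (last hist) < h" "i # last hist \<notin> set hist"
  shows "potential (hist @ [i # last hist]) + 1 \<le> potential hist"
proof -
  let ?v = "last hist" and ?V = "set hist" and ?w = "i # last hist"
  let ?V' = "insert ?w ?V"
  have w: "?w \<in> verts" using i walk_inv_last[OF I] by (simp add: verts_Cons)
  define A where "A = {x. x \<in> verts \<and> x \<noteq> [] \<and> \<not> explored ?V x}"
  define A' where "A' = {x. x \<in> verts \<and> x \<noteq> [] \<and> \<not> explored ?V' x}"
  define B where "B = {x. x \<in> verts \<and> x \<noteq> [] \<and> suffix x ?w \<and> explored ?V' x}"
  have fin_A: "finite A" unfolding A_def by (rule finite_verts_filter)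
  have A'_A: "A' \<subseteq> A" unfolding A_def A'_def explored_def by auto
  have B_A: "B \<subseteq> A - A'"
  proof
    fix x assume x: "x \<in> B"
    have "?w \<in> subtree x" using x w by (auto simp: B_def subtree_def)
    hence "\<not> explored ?V x" using i(3) by (auto simp: explored_def)
    thus "x \<in> A - A'" using x by (auto simp: A_def A'_def B_def)
  qed
  have split_A: "(\<Sum>x\<in>A. 2 * subtree_size x)
      = (\<Sum>x\<in>A'. 2 * subtree_size x) + (\<Sum>x\<in>A - A'. 2 * subtree_size x)"
    using sum.subset_diff[OF A'_A fin_A, of "\<lambda>x. 2 * subtree_size x"] by linarith
  have "return_cost ?V' ?w = (\<Sum>x\<in>B. 2 * subtree_size x - 1)" by (simp add: return_cost_def B_def)
  also have "\<dots> \<le> (\<Sum>x\<in>B. 2 * subtree_size x)" by (rule sum_mono) simp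
  also have "\<dots> \<le> (\<Sum>x\<in>A - A'. 2 * subtree_size x)" by (rule sum_mono2) (use fin_A B_A in auto)
  finally have new_return: "return_cost ?V' ?w \<le> (\<Sum>x\<in>A - A'. 2 * subtree_size x)" .
  have "\<not> explored ?V x" if "suffix x ?v" for x
  proof -
    have "?w \<in> subtree x" using that w by (auto simp: subtree_def intro: suffix_ConsI)
    thus ?thesis using i(3) by (auto simp: explored_def)
  qed
  hence no_old: "{x. x \<in> verts \<and> x \<noteq> [] \<and> suffix x ?v \<and> explored ?V x} = {}" by blast
  have old_return: "return_cost ?V ?v = 0" unfolding return_cost_def no_old by simp
  have "card (verts - ?V) > 0" using w i(3) finite_verts by (auto simp: card_gt_0_iff)
  hence unvisited: "card (verts - ?V) = card (verts - ?V') + 1" using w i(3) by simp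
  have "potential hist = (\<Sum>x\<in>A. 2 * subtree_size x) + card (verts - ?V)"
    by (simp add: potential_def unexplored_cost_def old_return A_def)
  moreover have "potential (hist @ [?w]) =
      (\<Sum>x\<in>A'. 2 * subtree_size x) + card (verts - ?V') + return_cost ?V' ?w"
    by (simp add: potential_def unexplored_cost_def A'_def)
  ultimately show ?thesis using split_A new_return unvisited by linarith
qed

lemma explored_if_no_frontier:
  assumes x: "x \<in> set hist" and no_frontier: "\<forall>y\<in>subtree x. y \<notin> frontier (set hist)"
  shows "explored (set hist) x"
proof -
  have "zs @ x \<in> verts \<Longrightarrow> zs @ x \<in> set hist" for zs
  proof (induction zs)
    case Nil thus ?case using x by simp
  next
    case (Cons a zs)
    have "zs @ x \<in> verts" using Cons.prems by (auto simp: tree_verts_def)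
    hence "zs @ x \<in> subtree x" by (auto simp: subtree_def suffix_def)
    hence "zs @ x \<in> set hist" "zs @ x \<notin> frontier (set hist)"
      using Cons.IH no_frontier \<open>zs @ x \<in> verts\<close> by auto
    moreover have "a < d" "length (zs @ x) < h" using Cons.prems by (auto simp: tree_verts_def)
    ultimately show ?case by (auto simp: frontier_def)
  qed
  thus ?thesis by (auto simp: explored_def subtree_def suffix_def)
qed

lemma off_frontier_explored:
  assumes I: "walk_inv hist" and nF: "last hist \<notin> frontier (set hist)"
    and not_all: "set hist \<noteq> verts"
  shows "last hist \<noteq> []" "explored (set hist) (last hist)"
    "\<And>c. c \<in> children (last hist) \<Longrightarrow> explored (set hist) c"
proof -
  let ?v = "last hist" and ?V = "set hist"
  note v = walk_inv_last[OF I]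
  have anc: "\<forall>y\<in>frontier ?V. suffix y ?v" using I by (simp add: walk_inv_def)
  have ev: "explored ?V ?v"
  proof (rule explored_if_no_frontier[OF v(1)], intro ballI notI)
    fix y assume "y \<in> subtree ?v" "y \<in> frontier ?V"
    hence "suffix ?v y" "suffix y ?v" using anc by (auto simp: subtree_def)
    hence "y = ?v" by (rule suffix_order.antisym[symmetric])
    thus False using nF \<open>y \<in> frontier ?V\<close> by simp
  qed
  thus "explored ?V ?v" .
  have "subtree [] = verts" by (auto simp: subtree_def)
  thus "?v \<noteq> []" using ev not_all I by (auto simp: explored_def walk_inv_def)
  fix c assume c: "c \<in> children ?v"
  then obtain i where ci: "c = i # ?v" "i < d" "length ?v < h"
    by (auto simp: children_def split: if_splits)
  have "c \<in> ?V" using nF v(1) ci by (auto simp: frontier_def)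
  thus "explored ?V c"
  proof (rule explored_if_no_frontier, intro ballI notI)
    fix y assume "y \<in> subtree c" "y \<in> frontier ?V"
    hence "suffix c y" "suffix y ?v" using anc by (auto simp: subtree_def)
    hence "length c \<le> length ?v" by (metis suffix_length_le order_trans)
    thus False using ci by simp
  qed
qed

lemma return_cost_parent:
  assumes "v \<noteq> []" "v \<in> verts" "explored V v"
  shows "return_cost V (tl v) + (2 * subtree_size v - 1) = return_cost V v"
proof -
  have anc_v: "suffix x v \<longleftrightarrow> x = v \<or> suffix x (tl v)" for x
    using suffix_Cons[of x "hd v" "tl v"] assms(1) by simp
  have eq: "{x. x \<in> verts \<and> x \<noteq> [] \<and> suffix x v \<and> explored V x}
      = insert v {x. x \<in> verts \<and> x \<noteq> [] \<and> suffix x (tl v) \<and> explored V x}"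
    using assms anc_v by auto
  have "v \<notin> {x. x \<in> verts \<and> x \<noteq> [] \<and> suffix x (tl v) \<and> explored V x}"
    using suffix_length_le[of v "tl v"] assms(1) by (cases v) auto
  thus ?thesis unfolding return_cost_def eq using finite_verts_filter by simp
qed

lemma return_cost_child:
  assumes "c \<in> children v" "v \<in> verts" "explored V c"
  shows "return_cost V c = return_cost V v + (2 * subtree_size c - 1)"
proof -
  obtain i where ci: "c = i # v" using assms(1) by (auto simp: children_def split: if_splits)
  have eq: "{x. x \<in> verts \<and> x \<noteq> [] \<and> suffix x c \<and> explored V x}
      = insert c {x. x \<in> verts \<and> x \<noteq> [] \<and> suffix x v \<and> explored V x}"
    using assms children_in_verts ci suffix_Cons[of _ i v] by auto
  have "c \<notin> {x. x \<in> verts \<and> x \<noteq> [] \<and> suffix x v \<and> explored V x}"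
    using suffix_length_le[of c v] ci by auto
  thus ?thesis unfolding return_cost_def eq using finite_verts_filter by simp
qed

text \<open>Off the frontier the walk takes a simple random step inside the explored region, and
  the potential is harmonic up to the unit cost: the mean over the neighbours of the
  potential after the step is the current potential minus one.  This is the identity
  2 N(v) - 1 = 1 + sum over children c of (2 N(c) - 1 + 1) behind the return times.\<close>
lemma random_potential_mean:
  assumes I: "walk_inv hist" and nF: "last hist \<notin> frontier (set hist)"
    and not_all: "set hist \<noteq> verts"
  shows "(\<Sum>w\<in>neighbours edges (last hist). potential (hist @ [w]))
           + card (neighbours edges (last hist))
         = card (neighbours edges (last hist)) * potential hist"
proof -
  let ?v = "last hist" and ?V = "set hist" and ?S = "neighbours edges (last hist)"
  note v = walk_inv_last[OF I] and ex = off_frontier_explored[OF I nF not_all]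
  note S = neighbours_nonroot[OF v(2) ex(1)]
  have pot_w: "potential (hist @ [w]) = unexplored_cost ?V + return_cost ?V w" if "w \<in> ?S" for w
    using walk_inv_random(1)[OF I nF that] by (simp add: potential_def insert_absorb)
  define k where "k = card (children ?v)"
  define s where "s = (\<Sum>c\<in>children ?v. subtree_size c)"
  have card_S: "card ?S = k + 1" using S finite_children by (simp add: k_def)
  have size_v: "subtree_size ?v = 1 + s" using subtree_size_decomp[OF v(2)] by (simp add: s_def)
  have up: "return_cost ?V (tl ?v) + (2 * subtree_size ?v - 1) = return_cost ?V ?v"
    by (rule return_cost_parent[OF ex(1) v(2) ex(2)])
  have down: "(\<Sum>c\<in>children ?v. return_cost ?V c)
      = k * return_cost ?V ?v + (\<Sum>c\<in>children ?v. 2 * subtree_size c - 1)"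
    using return_cost_child[OF _ v(2) ex(3)] by (simp add: sum.distrib k_def)
  have sizes: "(\<Sum>c\<in>children ?v. 2 * subtree_size c - 1) + k = 2 * s"
  proof -
    have "(\<Sum>c\<in>children ?v. 2 * subtree_size c - 1) + k
        = (\<Sum>c\<in>children ?v. (2 * subtree_size c - 1) + 1)"
      unfolding k_def card_eq_sum by (rule sum.distrib[symmetric])
    also have "\<dots> = (\<Sum>c\<in>children ?v. 2 * subtree_size c)"
      by (rule sum.cong[OF refl]) (use subtree_size_pos children_in_verts[OF v(2)] in fastforce)
    finally show ?thesis by (simp add: s_def sum_distrib_left)
  qed
  have "(\<Sum>w\<in>?S. potential (hist @ [w]))
      = card ?S * unexplored_cost ?V + (\<Sum>w\<in>?S. return_cost ?V w)"
    using pot_w by (simp add: sum.distrib)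
  also have "(\<Sum>w\<in>?S. return_cost ?V w)
      = return_cost ?V (tl ?v) + (\<Sum>c\<in>children ?v. return_cost ?V c)"
    using S finite_children by simp
  finally show ?thesis
    using card_S size_v up down sizes by (simp add: potential_def algebra_simps)
qed

section \<open>The drift of the stopped potential\<close>

lemma greedy_step_drift:
  assumes I: "walk_inv hist" and R: "valid_rule edges R" and F: "last hist \<in> frontier (set hist)"
  shows "(\<integral>\<^sup>+hist'. of_nat (walk_potential hist') \<partial>grw_step edges R hist) + 1
           \<le> (of_nat (walk_potential hist) :: ennreal)"
proof -
  have drop: "(of_nat (walk_potential (hist @ [w])) :: ennreal) + 1 \<le> of_nat (walk_potential hist)"
    if w: "w \<in> set_pmf (R hist)" for w
  proof -
    obtain i where i: "i < d" "w = i # last hist" "length (last hist) < h" "w \<notin> set hist"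
      using greedy_choice[OF I R F w] by blast
    have "w \<in> verts" using i walk_inv_last[OF I] by (simp add: verts_Cons)
    hence "walk_potential hist = potential hist" using i(4) by (auto simp: walk_potential_def)
    moreover have "walk_potential (hist @ [w]) \<le> potential (hist @ [w])"
      by (simp add: walk_potential_def)
    ultimately have "walk_potential (hist @ [w]) + 1 \<le> walk_potential hist"
      using greedy_potential_drop[OF I i(1,3)] i(2,4) by simp
    thus ?thesis by (metis of_nat_Suc of_nat_le_iff add.commute plus_1_eq_Suc)
  qed
  have "(\<integral>\<^sup>+hist'. of_nat (walk_potential hist') \<partial>grw_step edges R hist) + 1
      = (\<integral>\<^sup>+w. of_nat (walk_potential (hist @ [w])) + 1 \<partial>R hist)"
    using F by (simp add: grw_step_tree[OF I] nn_integral_add measure_pmf.emeasure_space_1)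
  also have "\<dots> \<le> of_nat (walk_potential hist)"
    by (rule nn_integral_pmf_le_const) (rule drop)
  finally show ?thesis .
qed

lemma random_step_drift:
  assumes dh: "0 < d" "0 < h" and I: "walk_inv hist" and nF: "last hist \<notin> frontier (set hist)"
    and not_all: "set hist \<noteq> verts"
  shows "(\<integral>\<^sup>+hist'. of_nat (walk_potential hist') \<partial>grw_step edges R hist) + 1
           = (of_nat (walk_potential hist) :: ennreal)"
proof -
  let ?S = "neighbours edges (last hist)"
  note S = neighbours_finite_nonempty[OF dh walk_inv_last(2)[OF I]]
  have pot_w: "walk_potential (hist @ [w]) = potential (hist @ [w])" if "w \<in> ?S" for w
    using walk_inv_random(1)[OF I nF that] not_all by (simp add: walk_potential_def insert_absorb)
  have "(\<integral>\<^sup>+hist'. of_nat (walk_potential hist') \<partial>grw_step edges R hist) + 1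
      = (\<integral>\<^sup>+w. of_nat (walk_potential (hist @ [w])) + 1 \<partial>pmf_of_set ?S)"
    using nF by (simp add: grw_step_tree[OF I] nn_integral_add measure_pmf.emeasure_space_1)
  also have "\<dots> = of_nat ((\<Sum>w\<in>?S. potential (hist @ [w])) + card ?S) / of_nat (card ?S)"
    using S pot_w by (simp add: nn_integral_pmf_of_set sum.distrib)
  also have "\<dots> = of_nat (card ?S) * of_nat (potential hist) / of_nat (card ?S)"
    using random_potential_mean[OF I nF not_all] by simp
  also have "\<dots> = of_nat (walk_potential hist)"
    using S not_all by (simp add: walk_potential_def ennreal_mult_divide_eq mult.commute)
  finally show ?thesis .
qed

lemma covered_step_potential:
  assumes "0 < d" "0 < h" and I: "walk_inv hist" and R: "valid_rule edges R"
    and all: "set hist = verts"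
  shows "(\<integral>\<^sup>+hist'. of_nat (walk_potential hist') \<partial>grw_step edges R hist) = 0"
proof -
  have "walk_potential hist' = 0" if hist': "hist' \<in> set_pmf (grw_step edges R hist)" for hist'
  proof -
    obtain w where "hist' = hist @ [w]" using hist' by (auto simp: grw_step_def)
    hence "verts \<subseteq> set hist'" using all by auto
    moreover have "set hist' \<subseteq> verts"
      using walk_inv_step[OF assms(1,2) I R hist'] by (simp add: walk_inv_def)
    ultimately show ?thesis by (simp add: walk_potential_def)
  qed
  thus ?thesis using nn_integral_pmf_le_const[of "grw_step edges R hist" _ 0] by simp
qed

lemma walk_drift:
  assumes dh: "0 < d" "0 < h" and I: "walk_inv hist" and R: "valid_rule edges R"
  shows "(\<integral>\<^sup>+hist'. of_nat (walk_potential hist') \<partial>grw_step edges R hist)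
           + (if used_edges hist \<noteq> edges then 1 else 0) \<le> (of_nat (walk_potential hist) :: ennreal)"
proof (cases "set hist = verts")
  case True
  thus ?thesis using covered_step_potential[OF dh I R] walk_inv_covered[OF I] by simp
next
  case False
  have "(\<integral>\<^sup>+hist'. of_nat (walk_potential hist') \<partial>grw_step edges R hist) + 1
      \<le> (of_nat (walk_potential hist) :: ennreal)"
    using greedy_step_drift[OF I R] random_step_drift[OF dh I _ False]
    by (cases "last hist \<in> frontier (set hist)") auto
  moreover have "(if used_edges hist \<noteq> edges then 1 else 0) \<le> (1::ennreal)" by simp
  ultimately show ?thesis by (meson add_left_mono order_trans)
qed

lemma card_ancestors_le: "card {x. x \<in> verts \<and> x \<noteq> [] \<and> suffix x y} \<le> length y"
proof -
  have "{x. x \<in> verts \<and> x \<noteq> [] \<and> suffix x y} \<subseteq> set (suffixes y) - {[]}"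
    by (auto simp: set_suffixes_eq)
  hence "card {x. x \<in> verts \<and> x \<noteq> [] \<and> suffix x y} \<le> card (set (suffixes y) - {[]})"
    by (rule card_mono[rotated]) simp
  also have "\<dots> = length y" by (simp add: card_Diff_singleton)
  finally show ?thesis .
qed

text \<open>Double counting: the subtree sizes sum to the number of (ancestor, vertex) pairs.\<close>
lemma sum_subtree_sizes_le: "(\<Sum>x | x \<in> verts \<and> x \<noteq> []. subtree_size x) \<le> card verts * h"
proof -
  let ?X = "{x. x \<in> verts \<and> x \<noteq> []}"
  let ?anc = "\<lambda>x y. if suffix x y then 1 else 0 :: nat"
  have count: "card {y \<in> A. P y} = (\<Sum>y\<in>A. if P y then 1 else 0 :: nat)" if "finite A" for A :: "nat list set" and P
    using sum.inter_filter[OF that, of "\<lambda>_. 1::nat" P] by simp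
  have "(\<Sum>x\<in>?X. subtree_size x) = (\<Sum>x\<in>?X. \<Sum>y\<in>verts. ?anc x y)"
    unfolding subtree_size_def subtree_def using count[OF finite_verts] by simp
  also have "\<dots> = (\<Sum>y\<in>verts. \<Sum>x\<in>?X. ?anc x y)" by (rule sum.swap)
  also have "\<dots> = (\<Sum>y\<in>verts. card {x. x \<in> verts \<and> x \<noteq> [] \<and> suffix x y})"
    using count[OF finite_verts_filter[of "\<lambda>x. x \<noteq> []"]] by simp
  also have "\<dots> \<le> (\<Sum>y\<in>verts. h)"
  proof (rule sum_mono)
    fix y assume "y \<in> verts"
    thus "card {x. x \<in> verts \<and> x \<noteq> [] \<and> suffix x y} \<le> h"
      using card_ancestors_le[of y] by (simp add: tree_verts_def)
  qed
  finally show ?thesis by simp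
qed

text \<open>Initially only the root is visited, so the potential is at most 2 n h + n.\<close>
lemma walk_potential_start:
  assumes "0 < h"
  shows "walk_potential [[]] \<le> 3 * card verts * h"
proof -
  have no_return: "return_cost {[]} [] = 0" by (simp add: return_cost_def)
  have "(\<Sum>x | x \<in> verts \<and> x \<noteq> [] \<and> \<not> explored {[]} x. 2 * subtree_size x)
      \<le> (\<Sum>x | x \<in> verts \<and> x \<noteq> []. 2 * subtree_size x)"
    by (rule sum_mono2) (auto intro: finite_verts_filter)
  also have "\<dots> \<le> 2 * (card verts * h)"
    using sum_subtree_sizes_le by (simp add: sum_distrib_left[symmetric])
  finally have "unexplored_cost {[]} \<le> 2 * (card verts * h) + card verts"
    using card_mono[OF finite_verts, of "verts - {[]}"] by (auto simp: unexplored_cost_def)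
  also have "\<dots> \<le> 3 * card verts * h" using assms by (simp add: mult_le_mono)
  finally show ?thesis by (simp add: walk_potential_def potential_def no_return)
qed

lemma height_le_log:
  assumes "2 \<le> d"
  shows "real h \<le> log (real d) (real (card verts))"
proof -
  have "real d ^ h \<le> real (card verts)"
    using power_le_card_verts by (metis of_nat_le_iff of_nat_power)
  hence "log (real d) (real d ^ h) \<le> log (real d) (real (card verts))"
    using assms by (intro log_mono) auto
  thus ?thesis using assms by (simp add: log_nat_power)
qed

end

theorem mainTheorem10:
  shows "\<exists>C::real. C > 0 \<and>
    (\<forall>d h. d \<ge> 2 \<longrightarrow> h \<ge> 1 \<longrightarrow>
      (\<forall>R. valid_rule (tree_edges d h) R \<longrightarrow>
        expected_edge_cover_time (tree_edges d h) R []
          \<le> ennreal (C * real (card (tree_verts d h))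
                       * log (real d) (real (card (tree_verts d h))))))"
proof (intro exI[of _ 3] conjI allI impI)
  fix d h :: nat and R
  assume d: "d \<ge> 2" and h: "h \<ge> 1" and R: "valid_rule (tree_edges d h) R"
  let ?n = "real (card (tree_verts d h))"
  have dh: "0 < d" "0 < h" using d h by auto
  have "real (walk_potential d h [[]]) \<le> 3 * ?n * real h"
    using walk_potential_start[OF dh(2)] by (metis of_nat_le_iff of_nat_mult of_nat_numeral)
  also have "\<dots> \<le> 3 * ?n * log (real d) ?n"
    using height_le_log[OF d] by (intro mult_left_mono) auto
  finally have bound: "real (walk_potential d h [[]]) \<le> 3 * ?n * log (real d) ?n" .
  have "expected_edge_cover_time (tree_edges d h) R [] \<le> of_nat (walk_potential d h [[]])"
    using walk_inv_start walk_inv_step[OF dh _ R] walk_drift[OF dh _ R]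
    by (rule grw_cover_time_drift)
  also have "\<dots> \<le> ennreal (3 * ?n * log (real d) ?n)"
    using bound by (simp add: ennreal_of_nat_eq_real_of_nat ennreal_leI)
  finally show "expected_edge_cover_time (tree_edges d h) R []
      \<le> ennreal (3 * ?n * log (real d) ?n)" .
qed (simp)

end
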